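(* Let $f,g\in\mathrm{Diff}(\mathbb{C},0)$ be distinct from the identity and suppose that $f,g$ satisfy no universal relation. Then there exists a set $\mathcal{U}\subseteq\mathrm{Diff}(\mathbb{C},0)$, dense for the analytic topology, such that for every $h\in\mathcal{U}$ the elements $f$ and $h^{-1}\circ g\circ h$ generate a free subgroup of $\mathrm{Diff}(\mathbb{C},0)$.
   Context: $\mathrm{Diff}(\mathbb{C},0)$ is the group of germs of holomorphic diffeomorphisms of $\mathbb{C}$ fixing $0$; $\widehat{\mathrm{Diff}}(\mathbb{C},0)$ is the group of formal series $\sum_{i\ge1}c_ix^i$ with $c_1\neq0$ under formal composition. For a reduced word $W(a,b)$ in $a^{\pm1},b^{\pm1}$, $W(f,g)$ denotes the element obtained by substituting $a=f,b=g$ and composing. A non-trivial reduced word $W(a,b)$ with $W(f,g)=\mathrm{id}$ is called a universal relation (for the pair $f,g$) if $W(f,\hat h^{-1}\circ g\circ\hat h)=\mathrm{id}$ for every $\hat h\in\widehat{\mathrm{Diff}}(\mathbb{C},0)$; "$f,g$ satisfy no universal relation" means no non-trivial reduced word is a universal relation. Analytic topology: for $r>0$ and $h$ holomorphic near $0$, $\|h\|_r=\sup_{B(r)}|h|$ if $h$ extends holomorphically to the open disc $B(r)$ of radius $r$, and $+\infty$ otherwise; a basis of open sets is given by $\{g:\|g-f\|_r<\varepsilon\}$, $f\in\mathrm{Diff}(\mathbb{C},0)$, $r,\varepsilon>0$. *)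

theory Defs
  imports "HOL-Analysis.Analysis"
begin

text \<open>Germs in Diff(C,0) are represented by their (convergent) Taylor series at 0;
  composition of germs is composition of power series (\<open>oo\<close>), and the
  identity is \<open>fps_X\<close>.\<close>

definition Diff0 :: "complex fps set" where
  "Diff0 = {F. fps_nth F 0 = 0 \<and> fps_nth F 1 \<noteq> 0 \<and> fps_conv_radius F > 0}"

definition FDiff0 :: "complex fps set" where
  "FDiff0 = {F. fps_nth F 0 = 0 \<and> fps_nth F 1 \<noteq> 0}"

text \<open>Letters: (is_a, is_inverse). A word is a list of letters.\<close>
type_synonym word = "(bool \<times> bool) list"

fun reduced :: "word \<Rightarrow> bool" where
  "reduced (x # y # w) = ((\<not> (fst x = fst y \<and> snd x \<noteq> snd y)) \<and> reduced (y # w))"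
| "reduced _ = True"

definition letter_eval :: "complex fps \<Rightarrow> complex fps \<Rightarrow> bool \<times> bool \<Rightarrow> complex fps" where
  "letter_eval f g l = (let u = (if fst l then f else g) in if snd l then fps_inv u else u)"

fun word_eval :: "word \<Rightarrow> complex fps \<Rightarrow> complex fps \<Rightarrow> complex fps" where
  "word_eval [] f g = fps_X"
| "word_eval (l # w) f g = letter_eval f g l oo word_eval w f g"

definition conj_by :: "complex fps \<Rightarrow> complex fps \<Rightarrow> complex fps" where
  "conj_by h g = fps_inv h oo (g oo h)"

definition universal_relation :: "word \<Rightarrow> complex fps \<Rightarrow> complex fps \<Rightarrow> bool" where
  "universal_relation W f g \<longleftrightarrow> W \<noteq> [] \<and> reduced W \<and> word_eval W f g = fps_X \<and>
     (\<forall>h\<in>FDiff0. word_eval W f (conj_by h g) = fps_X)"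

definition no_universal_relation :: "complex fps \<Rightarrow> complex fps \<Rightarrow> bool" where
  "no_universal_relation f g \<longleftrightarrow> (\<forall>W. \<not> universal_relation W f g)"

definition generate_free :: "complex fps \<Rightarrow> complex fps \<Rightarrow> bool" where
  "generate_free f k \<longleftrightarrow> (\<forall>W. W \<noteq> [] \<and> reduced W \<longrightarrow> word_eval W f k \<noteq> fps_X)"

definition extends_to :: "real \<Rightarrow> complex fps \<Rightarrow> (complex \<Rightarrow> complex) \<Rightarrow> bool" where
  "extends_to r F \<phi> \<longleftrightarrow> fps_conv_radius F > 0 \<and> \<phi> holomorphic_on ball 0 r \<and>
     (\<forall>\<^sub>F z in nhds 0. \<phi> z = eval_fps F z)"

definition anorm :: "real \<Rightarrow> complex fps \<Rightarrow> ereal" where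
  "anorm r F = (if \<exists>\<phi>. extends_to r F \<phi>
     then (SUP z\<in>ball 0 r. ereal (norm ((SOME \<phi>. extends_to r F \<phi>) z)))
     else \<infinity>)"

definition analytic_topology :: "complex fps topology" where
  "analytic_topology = topology_generated_by
     {{g\<in>Diff0. anorm r (g - f) < ereal \<epsilon>} | f r \<epsilon>. f \<in> Diff0 \<and> r > 0 \<and> \<epsilon> > 0}"

end

theory Submission
  imports Defs "HOL-Complex_Analysis.Complex_Analysis"
begin

no_notation vec_nth (infixl \<open>$\<close> 90)

text \<open>
  For a fixed nontrivial reduced word \<open>W\<close> there is a formal \<open>h\<^sub>W\<close> such that some
  coefficient of \<open>W(f, h\<^sub>W\<^sup>-\<^sup>1 g h\<^sub>W) - id\<close> is nonzero: the identity if already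
  \<open>W(f, g) \<noteq> id\<close>, and otherwise one provided by the absence of universal relations.
  On the complex line through a given germ \<open>h\<close> and the polynomial truncation of \<open>h\<^sub>W\<close>
  this coefficient is a holomorphic function of the parameter that does not vanish identically,
  so it is nonzero for parameters arbitrarily close to \<open>h\<close>. Enumerating all words and
  perturbing \<open>h\<close> successively by geometrically smaller polynomials, while keeping every
  coefficient made nonzero so far above a fixed margin, gives a sequence converging in a weighted
  \<open>\<ell>\<^sup>1\<close> norm on coefficients; its limit makes every word nontrivial. That norm is finer than
  the analytic topology, so the limit lies in any prescribed open set.
\<close>

definition nontrivial_word :: "word \<Rightarrow> bool" where
  "nontrivial_word W \<longleftrightarrow> W \<noteq> [] \<and> reduced W"

lemma fps_inv_nth: "fps_inv a $ n = compinv a n"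
  by (simp add: fps_inv_def)

lemma fps_compose_nth_1: "(a oo b) $ 1 = a $ 1 * b $ 1"
  by (simp add: fps_compose_nth)

lemma fps_inv_nth_1: "fps_inv a $ 1 = 1 / a $ 1"
  by (simp add: fps_inv_nth)

lemma conj_by_nth_1:
  assumes "h $ 1 \<noteq> 0"
  shows "conj_by h g $ 1 = g $ 1"
  unfolding conj_by_def fps_compose_nth_1 fps_inv_nth_1 using assms by simp

lemma conj_by_fps_X:
  assumes "g $ 0 = 0"
  shows "conj_by fps_X g = g"
proof -
  have "fps_inv fps_X oo fps_X = (fps_X :: complex fps)" by (rule fps_inv) auto
  then show ?thesis using assms by (simp add: conj_by_def)
qed

lemma exists_word_coeff_witness:
  assumes "g $ 0 = 0" "no_universal_relation f g" "nontrivial_word W"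
  shows "\<exists>h n. h $ 0 = 0 \<and> h $ 1 \<noteq> 0 \<and> word_eval W f (conj_by h g) $ n \<noteq> fps_X $ n"
proof (cases "word_eval W f g = fps_X")
  case False
  then obtain n where "word_eval W f g $ n \<noteq> fps_X $ n" using fps_ext by blast
  then show ?thesis using conj_by_fps_X[OF assms(1)] by (intro exI[of _ fps_X] exI[of _ n]) auto
next
  case True
  then obtain h where "h \<in> FDiff0" "word_eval W f (conj_by h g) \<noteq> fps_X"
    using assms(2,3)
    unfolding no_universal_relation_def universal_relation_def nontrivial_word_def by blast
  then show ?thesis unfolding FDiff0_def using fps_ext by blast
qed

section \<open>Coefficientwise limits, holomorphy and agreement\<close>

definition fps_coeffs_tendsto :: "'b filter \<Rightarrow> ('b \<Rightarrow> complex fps) \<Rightarrow> complex fps \<Rightarrow> bool" where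
  "fps_coeffs_tendsto F A a \<longleftrightarrow> (\<forall>k. ((\<lambda>x. A x $ k) \<longlongrightarrow> a $ k) F)"

lemma fps_coeffs_tendsto_const: "fps_coeffs_tendsto F (\<lambda>_. c) c"
  by (simp add: fps_coeffs_tendsto_def)

lemma fps_coeffs_tendsto_mult:
  assumes "fps_coeffs_tendsto F A a" "fps_coeffs_tendsto F B b"
  shows "fps_coeffs_tendsto F (\<lambda>x. A x * B x) (a * b)"
  using assms unfolding fps_coeffs_tendsto_def fps_mult_nth by (auto intro!: tendsto_intros)

lemma fps_coeffs_tendsto_power:
  assumes "fps_coeffs_tendsto F A a"
  shows "fps_coeffs_tendsto F (\<lambda>x. A x ^ i) (a ^ i)"
  by (induction i) (auto intro!: fps_coeffs_tendsto_mult assms fps_coeffs_tendsto_const)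

lemma fps_coeffs_tendsto_compose:
  assumes "fps_coeffs_tendsto F A a" "fps_coeffs_tendsto F B b"
  shows "fps_coeffs_tendsto F (\<lambda>x. A x oo B x) (a oo b)"
  using assms(1) fps_coeffs_tendsto_power[OF assms(2)]
  unfolding fps_coeffs_tendsto_def fps_compose_nth by (auto intro!: tendsto_intros)

lemma fps_coeffs_tendsto_fps_inv:
  assumes "fps_coeffs_tendsto F A a" "a $ 1 \<noteq> 0"
  shows "fps_coeffs_tendsto F (\<lambda>x. fps_inv (A x)) (fps_inv a)"
  unfolding fps_coeffs_tendsto_def fps_inv_nth
proof
  fix k
  have powers: "((\<lambda>x. (A x ^ i) $ j) \<longlongrightarrow> (a ^ i) $ j) F" for i j
    using fps_coeffs_tendsto_power[OF assms(1)] unfolding fps_coeffs_tendsto_def by blast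
  show "((\<lambda>x. compinv (A x) k) \<longlongrightarrow> compinv a k) F"
  proof (induction k rule: less_induct)
    case (less k)
    then show ?case
      using assms(2) powers[of 1 1] powers by (cases k) (auto intro!: tendsto_intros)
  qed
qed

lemma fps_coeffs_tendsto_word_eval_conj_by:
  assumes "fps_coeffs_tendsto F H h" "h $ 1 \<noteq> 0" "g $ 1 \<noteq> 0"
  shows "fps_coeffs_tendsto F (\<lambda>x. word_eval W f (conj_by (H x) g)) (word_eval W f (conj_by h g))"
proof (induction W)
  case Nil
  then show ?case by (simp add: fps_coeffs_tendsto_const)
next
  case (Cons l W)
  have "fps_coeffs_tendsto F (\<lambda>x. conj_by (H x) g) (conj_by h g)"
    unfolding conj_by_def
    by (intro fps_coeffs_tendsto_compose fps_coeffs_tendsto_fps_inv assms fps_coeffs_tendsto_const)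
  then have "fps_coeffs_tendsto F (\<lambda>x. letter_eval f (conj_by (H x) g) l) (letter_eval f (conj_by h g) l)"
    unfolding letter_eval_def Let_def using assms conj_by_nth_1
    by (auto intro!: fps_coeffs_tendsto_const fps_coeffs_tendsto_fps_inv)
  then show ?case using Cons by (simp add: fps_coeffs_tendsto_compose)
qed

definition fps_coeffs_holomorphic_on :: "complex set \<Rightarrow> (complex \<Rightarrow> complex fps) \<Rightarrow> bool" where
  "fps_coeffs_holomorphic_on S A \<longleftrightarrow> (\<forall>k. (\<lambda>x. A x $ k) holomorphic_on S)"

lemma fps_coeffs_holomorphic_on_const: "fps_coeffs_holomorphic_on S (\<lambda>_. c)"
  by (simp add: fps_coeffs_holomorphic_on_def)

lemma fps_coeffs_holomorphic_on_mult:
  assumes "fps_coeffs_holomorphic_on S A" "fps_coeffs_holomorphic_on S B"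
  shows "fps_coeffs_holomorphic_on S (\<lambda>x. A x * B x)"
  using assms unfolding fps_coeffs_holomorphic_on_def fps_mult_nth
  by (auto intro!: holomorphic_intros)

lemma fps_coeffs_holomorphic_on_power:
  assumes "fps_coeffs_holomorphic_on S A"
  shows "fps_coeffs_holomorphic_on S (\<lambda>x. A x ^ i)"
  by (induction i)
    (auto intro!: fps_coeffs_holomorphic_on_mult assms fps_coeffs_holomorphic_on_const)

lemma fps_coeffs_holomorphic_on_compose:
  assumes "fps_coeffs_holomorphic_on S A" "fps_coeffs_holomorphic_on S B"
  shows "fps_coeffs_holomorphic_on S (\<lambda>x. A x oo B x)"
  using assms(1) fps_coeffs_holomorphic_on_power[OF assms(2)]
  unfolding fps_coeffs_holomorphic_on_def fps_compose_nth by (auto intro!: holomorphic_intros)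

lemma fps_coeffs_holomorphic_on_fps_inv:
  assumes "fps_coeffs_holomorphic_on S A" "\<And>x. x \<in> S \<Longrightarrow> A x $ 1 \<noteq> 0"
  shows "fps_coeffs_holomorphic_on S (\<lambda>x. fps_inv (A x))"
  unfolding fps_coeffs_holomorphic_on_def fps_inv_nth
proof
  fix k
  have powers: "(\<lambda>x. (A x ^ i) $ j) holomorphic_on S" for i j
    using fps_coeffs_holomorphic_on_power[OF assms(1)]
    unfolding fps_coeffs_holomorphic_on_def by blast
  show "(\<lambda>x. compinv (A x) k) holomorphic_on S"
  proof (induction k rule: less_induct)
    case (less k)
    then show ?case
      using assms(2) powers[of 1 1] powers by (cases k) (auto intro!: holomorphic_intros)
  qed
qed

lemma fps_coeffs_holomorphic_on_word_eval_conj_by: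
  assumes "fps_coeffs_holomorphic_on S H" "\<And>x. x \<in> S \<Longrightarrow> H x $ 1 \<noteq> 0" "g $ 1 \<noteq> 0"
  shows "fps_coeffs_holomorphic_on S (\<lambda>x. word_eval W f (conj_by (H x) g))"
proof (induction W)
  case Nil
  then show ?case by (simp add: fps_coeffs_holomorphic_on_const)
next
  case (Cons l W)
  have "fps_coeffs_holomorphic_on S (\<lambda>x. conj_by (H x) g)"
    unfolding conj_by_def
    by (intro fps_coeffs_holomorphic_on_compose fps_coeffs_holomorphic_on_fps_inv assms
        fps_coeffs_holomorphic_on_const)
  then have "fps_coeffs_holomorphic_on S (\<lambda>x. letter_eval f (conj_by (H x) g) l)"
    unfolding letter_eval_def Let_def using assms conj_by_nth_1
    by (cases "fst l"; cases "snd l")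
      (auto intro!: fps_coeffs_holomorphic_on_const fps_coeffs_holomorphic_on_fps_inv)
  then show ?case using Cons by (simp add: fps_coeffs_holomorphic_on_compose)
qed

definition fps_agree :: "nat \<Rightarrow> complex fps \<Rightarrow> complex fps \<Rightarrow> bool" where
  "fps_agree n a b \<longleftrightarrow> (\<forall>k\<le>n. a $ k = b $ k)"

lemma fps_agree_refl: "fps_agree n a a"
  by (simp add: fps_agree_def)

lemma fps_agree_mult:
  assumes "fps_agree n a a'" "fps_agree n b b'"
  shows "fps_agree n (a * b) (a' * b')"
  using assms unfolding fps_agree_def fps_mult_nth by (auto intro!: sum.cong)

lemma fps_agree_power:
  assumes "fps_agree n a a'"
  shows "fps_agree n (a ^ i) (a' ^ i)"
  by (induction i) (auto intro!: fps_agree_mult assms fps_agree_refl)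

lemma fps_agree_compose:
  assumes "fps_agree n a a'" "fps_agree n b b'"
  shows "fps_agree n (a oo b) (a' oo b')"
  using assms(1) fps_agree_power[OF assms(2)]
  unfolding fps_agree_def fps_compose_nth by (auto intro!: sum.cong)

lemma fps_agree_fps_inv:
  assumes "fps_agree n a a'" "n \<ge> 1"
  shows "fps_agree n (fps_inv a) (fps_inv a')"
  unfolding fps_agree_def fps_inv_nth
proof (intro allI impI)
  fix k assume "k \<le> n"
  then show "compinv a k = compinv a' k"
  proof (induction k rule: less_induct)
    case (less k)
    show ?case
    proof (cases k)
      case (Suc m)
      have "(a ^ i) $ Suc m = (a' ^ i) $ Suc m" for i
        using fps_agree_power[OF assms(1), of i] less.prems Suc unfolding fps_agree_def by auto
      moreover have "a $ 1 = a' $ 1"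
        using assms unfolding fps_agree_def by auto
      ultimately show ?thesis
        using less Suc by (auto intro!: sum.cong)
    qed simp
  qed
qed

lemma fps_agree_word_eval_conj_by:
  assumes "fps_agree n h h'" "n \<ge> 1"
  shows "fps_agree n (word_eval W f (conj_by h g)) (word_eval W f (conj_by h' g))"
proof (induction W)
  case Nil
  then show ?case by (simp add: fps_agree_refl)
next
  case (Cons l W)
  have "fps_agree n (conj_by h g) (conj_by h' g)"
    unfolding conj_by_def by (intro fps_agree_compose fps_agree_fps_inv assms fps_agree_refl)
  then have "fps_agree n (letter_eval f (conj_by h g) l) (letter_eval f (conj_by h' g) l)"
    unfolding letter_eval_def Let_def using assms by (auto intro!: fps_agree_refl fps_agree_fps_inv)
  then show ?case using Cons by (simp add: fps_agree_compose)
qed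


section \<open>Nontriviality along a complex line\<close>

lemma connected_affine_nonzero:
  fixes a c :: complex
  assumes "a \<noteq> 0"
  shows "connected {t. a + t * c \<noteq> 0}"
proof (cases "c = 0")
  case True
  then show ?thesis using assms by (simp add: connected_UNIV)
next
  case False
  then have "{t. a + t * c \<noteq> 0} = - {- a / c}"
    by (auto simp: field_simps add_eq_0_iff)
  then show ?thesis
    using path_connected_punctured_universe[of "- a / c"] path_connected_imp_connected by auto
qed

lemma frequently_word_coeff_ne_near_0:
  fixes h h' :: "complex fps"
  assumes g1: "g $ 1 \<noteq> 0" and h1: "h $ 1 \<noteq> 0" and h'1: "h' $ 1 \<noteq> 0"
    and witness: "word_eval W f (conj_by h' g) $ n \<noteq> fps_X $ n"
  defines "E \<equiv> fps_cutoff (Suc (max n 1)) h' - fps_cutoff (Suc (max n 1)) h"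
  shows "\<exists>\<^sub>F t in nhds 0. (h + fps_const t * E) $ 1 \<noteq> 0 \<and>
           word_eval W f (conj_by (h + fps_const t * E) g) $ n \<noteq> fps_X $ n"
proof (rule ccontr)
  define H where "H t = h + fps_const t * E" for t
  define S where "S = {t. H t $ 1 \<noteq> 0}"
  define \<Phi> where "\<Phi> t = word_eval W f (conj_by (H t) g) $ n - fps_X $ n" for t
  have H_nth: "H t $ k = h $ k + t * E $ k" for t k
    by (simp add: H_def)
  assume "\<not> ?thesis"
  then have "\<forall>\<^sub>F t in nhds 0. t \<in> S \<longrightarrow> \<Phi> t = 0"
    unfolding not_frequently by (auto simp: S_def \<Phi>_def H_def elim!: eventually_mono)
  then obtain U where U: "open U" "0 \<in> U" "\<And>t. t \<in> U \<Longrightarrow> t \<in> S \<Longrightarrow> \<Phi> t = 0"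
    unfolding eventually_nhds by blast
  have "open S"
    unfolding S_def H_nth by (intro open_Collect_neq continuous_intros)
  have "connected S"
    unfolding S_def H_nth using h1 by (rule connected_affine_nonzero)
  have "fps_coeffs_holomorphic_on S H"
    unfolding fps_coeffs_holomorphic_on_def H_nth by (auto intro!: holomorphic_intros)
  then have "fps_coeffs_holomorphic_on S (\<lambda>t. word_eval W f (conj_by (H t) g))"
    by (rule fps_coeffs_holomorphic_on_word_eval_conj_by) (use g1 in \<open>auto simp: S_def\<close>)
  then have "\<Phi> holomorphic_on S"
    unfolding fps_coeffs_holomorphic_on_def \<Phi>_def by (auto intro!: holomorphic_intros)
  \<comment> \<open>The \<open>n\<close>-th coefficient of a word only sees the coefficients of the conjugator up to
    order \<open>max n 1\<close>, where \<open>H 1\<close> coincides with \<open>h'\<close>.\<close>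
  have "fps_agree (max n 1) (H 1) h'"
    unfolding fps_agree_def H_nth E_def by simp
  then have "fps_agree (max n 1) (word_eval W f (conj_by (H 1) g)) (word_eval W f (conj_by h' g))"
    by (intro fps_agree_word_eval_conj_by) auto
  then have "\<Phi> 1 \<noteq> 0"
    using witness unfolding fps_agree_def \<Phi>_def by auto
  moreover have "\<Phi> 1 = 0"
  proof (rule analytic_continuation_open[of "U \<inter> S" S \<Phi> "\<lambda>_. 0"])
    show "U \<inter> S \<noteq> {}"
      using U h1 by (auto simp: S_def H_nth)
    show "1 \<in> S"
      using h'1 by (simp add: S_def H_nth E_def)
  qed (use U \<open>open S\<close> \<open>connected S\<close> \<open>\<Phi> holomorphic_on S\<close> in auto)
  ultimately show False by simp
qed

section \<open>Weighted coefficient sums\<close>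

definition weighted_sum :: "real \<Rightarrow> nat \<Rightarrow> complex fps \<Rightarrow> real" where
  "weighted_sum R K D = (\<Sum>k<K. norm (D $ k) * R ^ k)"

lemma weighted_sum_add:
  "R \<ge> 0 \<Longrightarrow> weighted_sum R K (A + B) \<le> weighted_sum R K A + weighted_sum R K B"
  unfolding weighted_sum_def sum.distrib[symmetric]
  by (intro sum_mono)
    (auto simp: distrib_right[symmetric] norm_triangle_ineq intro!: mult_right_mono)

lemma weighted_sum_fps_const_mult:
  "weighted_sum R K (fps_const t * A) = norm t * weighted_sum R K A"
  unfolding weighted_sum_def by (simp add: sum_distrib_left norm_mult mult.assoc)

lemma norm_nth_mult_power_le_weighted_sum:
  assumes "R \<ge> 0" "k < K"
  shows "norm (D $ k) * R ^ k \<le> weighted_sum R K D"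
  unfolding weighted_sum_def using assms by (intro member_le_sum) auto

lemma weighted_sum_le_of_vanishing_above:
  assumes "R \<ge> 0" "\<And>k. k > N \<Longrightarrow> E $ k = 0"
  shows "weighted_sum R K E \<le> weighted_sum R (Suc N) E"
proof -
  have "weighted_sum R K E = (\<Sum>k\<in>{..<K} \<inter> {..N}. norm (E $ k) * R ^ k)"
    unfolding weighted_sum_def using assms(2) by (intro sum.mono_neutral_right) auto
  also have "\<dots> \<le> (\<Sum>k\<in>{..N}. norm (E $ k) * R ^ k)"
    using assms(1) by (intro sum_mono2) auto
  also have "\<dots> = weighted_sum R (Suc N) E"
    unfolding weighted_sum_def lessThan_Suc_atMost ..
  finally show ?thesis .
qed

section \<open>The inductive construction\<close>

lemma margin_step:
  fixes a b :: "'a::real_normed_vector"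
  assumes "m * (1 + (1/2) ^ j) \<le> norm a" "norm (b - a) < m * (1/2) ^ Suc j"
  shows "m * (1 + (1/2) ^ Suc j) \<le> norm b"
proof -
  have "norm a - norm b \<le> norm (b - a)"
    using norm_triangle_ineq2[of a b] by (simp add: norm_minus_commute)
  moreover have "m * (1 + (1/2) ^ j) - m * (1/2) ^ Suc j = m * (1 + (1/2) ^ Suc j)"
    by (simp add: algebra_simps)
  ultimately show ?thesis using assms by linarith
qed

locale free_perturbation =
  fixes f g p :: "complex fps" and R \<delta> :: real
    and witness :: "word \<Rightarrow> complex fps" and witness_index :: "word \<Rightarrow> nat"
  assumes g_nth_1: "g $ 1 \<noteq> 0" and p_nth_0: "p $ 0 = 0" and p_nth_1: "p $ 1 \<noteq> 0"
    and R_pos: "R > 0" and \<delta>_pos: "\<delta> > 0"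
    and witness_nth_0: "nontrivial_word W \<Longrightarrow> witness W $ 0 = 0"
    and witness_nth_1: "nontrivial_word W \<Longrightarrow> witness W $ 1 \<noteq> 0"
    and witness_word: "nontrivial_word W \<Longrightarrow>
      word_eval W f (conj_by (witness W) g) $ witness_index W \<noteq> fps_X $ witness_index W"
begin

definition defect :: "word \<Rightarrow> complex fps \<Rightarrow> complex" where
  "defect W h = word_eval W f (conj_by h g) $ witness_index W - fps_X $ witness_index W"

definition budget :: real where
  "budget = min \<delta> (norm (p $ 1) * R / 2)"

text \<open>
  At stage \<open>j\<close> the defects of the first \<open>j\<close> words
  stay above their margins \<open>m i\<close> with slack \<open>(1/2)^j\<close>, and the part \<open>(1/2)^j\<close> of the budget
  that is still unspent pays for all later perturbations.
\<close>
definition stage :: "nat \<Rightarrow> complex fps \<Rightarrow> (nat \<Rightarrow> real) \<Rightarrow> bool" where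
  "stage j D m \<longleftrightarrow> D $ 0 = 0 \<and> (\<forall>K. weighted_sum R K D \<le> budget * (1 - (1/2) ^ j)) \<and>
     (\<forall>i<j. nontrivial_word (from_nat i) \<longrightarrow>
        m i > 0 \<and> m i * (1 + (1/2) ^ j) \<le> norm (defect (from_nat i) (p + D)))"

lemma budget_pos: "budget > 0"
  unfolding budget_def using \<delta>_pos p_nth_1 R_pos by auto

lemma nth_1_ne_if_weighted_sum_le_budget:
  assumes "\<And>K. weighted_sum R K D \<le> budget"
  shows "(p + D) $ 1 \<noteq> 0"
proof
  assume "(p + D) $ 1 = 0"
  then have "norm (p $ 1) * R = norm (D $ 1) * R ^ 1"
    by (simp add: add_eq_0_iff)
  also have "\<dots> \<le> weighted_sum R 2 D"
    using R_pos by (intro norm_nth_mult_power_le_weighted_sum) auto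
  also have "\<dots> \<le> norm (p $ 1) * R / 2"
    using assms[of 2] unfolding budget_def by simp
  finally show False using p_nth_1 R_pos by (simp add: mult_le_0_iff)
qed

lemma stage_weighted_sum_le_budget:
  assumes "stage j D m"
  shows "weighted_sum R K D \<le> budget"
proof -
  have "weighted_sum R K D \<le> budget * (1 - (1/2) ^ j)"
    using assms unfolding stage_def by blast
  also have "\<dots> \<le> budget"
    using budget_pos by (simp add: mult_left_le)
  finally show ?thesis .
qed

lemma stage_0: "stage 0 0 m"
  unfolding stage_def by (simp add: weighted_sum_def)

lemma stage_Suc_trivial_word:
  assumes "stage j D m" "\<not> nontrivial_word (from_nat j)"
  shows "stage (Suc j) D m"
  unfolding stage_def
proof (intro conjI allI impI)
  show "D $ 0 = 0"
    using assms(1) unfolding stage_def by blast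
  fix K
  have "weighted_sum R K D \<le> budget * (1 - (1/2) ^ j)"
    using assms(1) unfolding stage_def by blast
  also have "\<dots> \<le> budget * (1 - (1/2) ^ Suc j)"
    using budget_pos by (intro mult_left_mono) auto
  finally show "weighted_sum R K D \<le> budget * (1 - (1/2) ^ Suc j)" .
next
  fix i assume i: "i < Suc j" "nontrivial_word (from_nat i)"
  then have "i < j" using assms(2) less_Suc_eq by blast
  then have "m i > 0" "m i * (1 + (1/2) ^ j) \<le> norm (defect (from_nat i) (p + D))"
    using assms(1) i(2) unfolding stage_def by auto
  moreover have "m i * (1 + (1/2) ^ Suc j) \<le> m i * (1 + (1/2) ^ j)"
    using \<open>m i > 0\<close> by (intro mult_left_mono) auto
  ultimately show "m i > 0" "m i * (1 + (1/2) ^ Suc j) \<le> norm (defect (from_nat i) (p + D))"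
    by (blast intro: order_trans)+
qed

lemma eventually_defect_close:
  assumes "h $ 1 \<noteq> 0" "\<epsilon> > 0"
  shows "\<forall>\<^sub>F t in nhds 0. norm (defect W (h + fps_const t * E) - defect W h) < \<epsilon>"
proof -
  have "((\<lambda>t. t) \<longlongrightarrow> 0) (nhds (0::complex))"
    by (rule filterlim_ident)
  then have "fps_coeffs_tendsto (nhds 0) (\<lambda>t. h + fps_const t * E) h"
    unfolding fps_coeffs_tendsto_def by (auto intro!: tendsto_eq_intros)
  then have "fps_coeffs_tendsto (nhds 0) (\<lambda>t. word_eval W f (conj_by (h + fps_const t * E) g))
      (word_eval W f (conj_by h g))"
    using assms(1) g_nth_1 by (rule fps_coeffs_tendsto_word_eval_conj_by)
  then have "((\<lambda>t. defect W (h + fps_const t * E)) \<longlongrightarrow> defect W h) (nhds 0)"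
    unfolding defect_def fps_coeffs_tendsto_def by (intro tendsto_intros) blast
  then show ?thesis
    using assms(2) unfolding tendsto_iff dist_norm by blast
qed

lemma stage_Suc_perturb:
  assumes stage: "stage j D m"
    and E_nth_0: "E $ 0 = 0"
    and E_small: "\<And>K. weighted_sum R K E \<le> budget * (1/2) ^ Suc j"
    and new: "defect (from_nat j) (p + D + E) \<noteq> 0"
    and close: "\<And>i. i < j \<Longrightarrow> nontrivial_word (from_nat i) \<Longrightarrow>
      norm (defect (from_nat i) (p + D + E) - defect (from_nat i) (p + D)) < m i * (1/2) ^ Suc j"
  shows "stage (Suc j) (D + E) (m(j := norm (defect (from_nat j) (p + D + E)) / 2))"
proof -
  define m' where "m' = m(j := norm (defect (from_nat j) (p + D + E)) / 2)"
  have "(D + E) $ 0 = 0"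
    using stage E_nth_0 unfolding stage_def by simp
  moreover have "weighted_sum R K (D + E) \<le> budget * (1 - (1/2) ^ Suc j)" for K
  proof -
    have "weighted_sum R K (D + E) \<le> weighted_sum R K D + weighted_sum R K E"
      using R_pos by (intro weighted_sum_add) auto
    also have "\<dots> \<le> budget * (1 - (1/2) ^ j) + budget * (1/2) ^ Suc j"
      using stage E_small unfolding stage_def by (intro add_mono) auto
    finally show ?thesis
      by (simp add: algebra_simps)
  qed
  moreover have "m' i > 0 \<and> m' i * (1 + (1/2) ^ Suc j) \<le> norm (defect (from_nat i) (p + (D + E)))"
    if i: "i < Suc j" "nontrivial_word (from_nat i)" for i
  proof (cases "i = j")
    case True
    have "(1::real) + (1/2) ^ Suc j \<le> 2"
      using power_le_one[of "1/2::real" "Suc j"] by linarith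
    then show ?thesis
      using new True unfolding m'_def by (simp add: add.assoc mult_le_cancel_left_pos)
  next
    case False
    then have "i < j" using i by simp
    then have "m i > 0" "m i * (1 + (1/2) ^ j) \<le> norm (defect (from_nat i) (p + D))"
      using stage i(2) unfolding stage_def by auto
    then show ?thesis
      using margin_step[OF _ close[OF \<open>i < j\<close> i(2)]] \<open>i < j\<close> unfolding m'_def
      by (simp add: add.assoc)
  qed
  ultimately show ?thesis
    unfolding stage_def m'_def by blast
qed

lemma stage_Suc_nontrivial_word:
  assumes stage: "stage j D m" and W: "nontrivial_word (from_nat j)"
  shows "\<exists>D' m'. stage (Suc j) D' m' \<and>
    (\<forall>K. weighted_sum R K (D' - D) \<le> budget * (1/2) ^ Suc j) \<and> (\<forall>i<j. m' i = m i)"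
proof -
  define h where "h = p + D"
  define N where "N = max (witness_index (from_nat j)) 1"
  define E where "E = fps_cutoff (Suc N) (witness (from_nat j)) - fps_cutoff (Suc N) h"
  define b where "b = budget * (1/2) ^ Suc j"
  define \<nu> where "\<nu> = weighted_sum R (Suc N) E"
  define I where "I = {i. i < j \<and> nontrivial_word (from_nat i)}"
  have "b > 0"
    unfolding b_def using budget_pos by simp
  have h_nth_1: "h $ 1 \<noteq> 0"
    unfolding h_def using stage_weighted_sum_le_budget[OF stage]
    by (rule nth_1_ne_if_weighted_sum_le_budget)
  have close: "\<forall>\<^sub>F t in nhds 0. \<forall>i\<in>I.
      norm (defect (from_nat i) (h + fps_const t * E) - defect (from_nat i) h) < m i * (1/2) ^ Suc j"
    using stage h_nth_1 unfolding I_def stage_def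
    by (intro eventually_ball_finite ballI eventually_defect_close) auto
  have small: "\<forall>\<^sub>F t in nhds 0. norm (t::complex) * \<nu> < b"
  proof -
    have "open {t::complex. norm t * \<nu> < b}"
      by (intro open_Collect_less continuous_intros)
    then show ?thesis
      using eventually_nhds_in_open[of _ 0] \<open>b > 0\<close> by fastforce
  qed
  have new: "\<exists>\<^sub>F t in nhds 0. (h + fps_const t * E) $ 1 \<noteq> 0 \<and>
      defect (from_nat j) (h + fps_const t * E) \<noteq> 0"
    using frequently_word_coeff_ne_near_0[OF g_nth_1 h_nth_1 witness_nth_1[OF W] witness_word[OF W]]
    unfolding defect_def E_def N_def by simp
  obtain t where t: "\<forall>i\<in>I.
      norm (defect (from_nat i) (h + fps_const t * E) - defect (from_nat i) h) < m i * (1/2) ^ Suc j"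
    "norm t * \<nu> < b" "defect (from_nat j) (h + fps_const t * E) \<noteq> 0"
    using frequently_ex[OF frequently_eventually_conj[OF new eventually_conj[OF close small]]] by blast
  have step: "weighted_sum R K (fps_const t * E) \<le> b" for K
  proof -
    have "weighted_sum R K (fps_const t * E) = norm t * weighted_sum R K E"
      by (rule weighted_sum_fps_const_mult)
    also have "\<dots> \<le> norm t * \<nu>"
      unfolding \<nu>_def using R_pos
      by (intro mult_left_mono weighted_sum_le_of_vanishing_above) (auto simp: E_def)
    finally show ?thesis using t(2) by simp
  qed
  have "(fps_const t * E) $ 0 = 0"
    using stage witness_nth_0[OF W] p_nth_0 unfolding stage_def E_def h_def by simp
  then have "stage (Suc j) (D + fps_const t * E)
      (m(j := norm (defect (from_nat j) (p + D + fps_const t * E)) / 2))"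
    using stage step t(1,3) unfolding b_def I_def h_def
    by (intro stage_Suc_perturb) auto
  then show ?thesis
    using step unfolding b_def by (intro exI conjI) auto
qed

lemma stage_Suc:
  assumes "stage j D m"
  shows "\<exists>D' m'. stage (Suc j) D' m' \<and>
    (\<forall>K. weighted_sum R K (D' - D) \<le> budget * (1/2) ^ Suc j) \<and> (\<forall>i<j. m' i = m i)"
proof (cases "nontrivial_word (from_nat j)")
  case True
  then show ?thesis using assms by (rule stage_Suc_nontrivial_word[rotated])
next
  case False
  then have "stage (Suc j) D m" using assms by (intro stage_Suc_trivial_word)
  moreover have "weighted_sum R K (D - D) \<le> budget * (1/2) ^ Suc j" for K
    using budget_pos by (simp add: weighted_sum_def)
  ultimately show ?thesis by blast
qed

end


locale free_perturbation_sequence = free_perturbation +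
  fixes Ds :: "nat \<Rightarrow> complex fps" and ms :: "nat \<Rightarrow> nat \<Rightarrow> real"
  assumes stage_Ds: "stage j (Ds j) (ms j)"
    and weighted_sum_increment: "weighted_sum R K (Ds (Suc j) - Ds j) \<le> budget * (1/2) ^ Suc j"
    and ms_Suc: "i < j \<Longrightarrow> ms (Suc j) i = ms j i"
begin

definition limit :: "complex fps" where
  "limit = Abs_fps (\<lambda>k. lim (\<lambda>j. Ds j $ k))"

lemma summable_increment_nth: "summable (\<lambda>j. (Ds (Suc j) - Ds j) $ k)"
proof (rule summable_comparison_test)
  have "norm ((Ds (Suc j) - Ds j) $ k) * R ^ k \<le> budget * (1/2) ^ Suc j" for j
    using R_pos
    by (intro order_trans[OF norm_nth_mult_power_le_weighted_sum weighted_sum_increment]) auto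
  then show "\<exists>N. \<forall>j\<ge>N. norm ((Ds (Suc j) - Ds j) $ k) \<le> budget / R ^ k * (1/2) ^ Suc j"
    using R_pos by (auto simp: field_simps)
  show "summable (\<lambda>j. budget / R ^ k * (1/2::real) ^ Suc j)"
    by (intro summable_mult summable_geometric[THEN summable_Suc_iff[THEN iffD2]]) simp
qed

lemma Ds_nth_tendsto_limit: "(\<lambda>j. Ds j $ k) \<longlonglongrightarrow> limit $ k"
proof -
  have "(\<lambda>j. \<Sum>i<j. (Ds (Suc i) - Ds i) $ k) \<longlonglongrightarrow> (\<Sum>i. (Ds (Suc i) - Ds i) $ k)"
    by (rule summable_LIMSEQ[OF summable_increment_nth])
  then have "(\<lambda>j. Ds 0 $ k + (\<Sum>i<j. (Ds (Suc i) - Ds i) $ k)) \<longlonglongrightarrow>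
      Ds 0 $ k + (\<Sum>i. (Ds (Suc i) - Ds i) $ k)"
    by (intro tendsto_intros)
  then have "(\<lambda>j. Ds j $ k) \<longlonglongrightarrow> Ds 0 $ k + (\<Sum>i. (Ds (Suc i) - Ds i) $ k)"
    unfolding fps_sub_nth by (simp add: sum_lessThan_telescope[of "\<lambda>i. Ds i $ k"])
  then show ?thesis
    unfolding limit_def fps_nth_Abs_fps by (metis limI)
qed

lemma weighted_sum_limit_le_budget: "weighted_sum R K limit \<le> budget"
proof (rule LIMSEQ_le_const2)
  show "(\<lambda>j. weighted_sum R K (Ds j)) \<longlonglongrightarrow> weighted_sum R K limit"
    unfolding weighted_sum_def by (intro tendsto_intros Ds_nth_tendsto_limit)
  show "\<exists>N. \<forall>j\<ge>N. weighted_sum R K (Ds j) \<le> budget"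
    using stage_weighted_sum_le_budget[OF stage_Ds] by blast
qed

lemma limit_nth_0: "limit $ 0 = 0"
  using Ds_nth_tendsto_limit[of 0] stage_Ds unfolding stage_def by (simp add: LIMSEQ_const_iff)

lemma limit_nth_1: "(p + limit) $ 1 \<noteq> 0"
  using weighted_sum_limit_le_budget by (rule nth_1_ne_if_weighted_sum_le_budget)

lemma weighted_summable_limit:
  "summable (\<lambda>k. norm (limit $ k) * R ^ k)" "(\<Sum>k. norm (limit $ k) * R ^ k) \<le> \<delta>"
proof -
  have partial: "(\<Sum>k<K. norm (limit $ k) * R ^ k) \<le> budget" for K
    using weighted_sum_limit_le_budget unfolding weighted_sum_def .
  show summable: "summable (\<lambda>k. norm (limit $ k) * R ^ k)"
    using R_pos partial[of "Suc _"] unfolding lessThan_Suc_atMost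
    by (intro bounded_imp_summable[of _ budget]) auto
  have "(\<Sum>k. norm (limit $ k) * R ^ k) \<le> budget"
    by (rule suminf_le_const[OF summable partial])
  then show "(\<Sum>k. norm (limit $ k) * R ^ k) \<le> \<delta>"
    unfolding budget_def by linarith
qed

lemma ms_eventually_const: "Suc i \<le> j \<Longrightarrow> ms j i = ms (Suc i) i"
proof (induction j rule: dec_induct)
  case (step j)
  then show ?case using ms_Suc[of i j] by simp
qed simp

lemma word_eval_limit_ne:
  assumes W: "nontrivial_word W"
  shows "word_eval W f (conj_by (p + limit) g) \<noteq> fps_X"
proof -
  define i where "i = to_nat W"
  define M where "M = ms (Suc i) i"
  have margin: "M > 0 \<and> M \<le> norm (defect W (p + Ds j))" if "Suc i \<le> j" for j
  proof -
    have "from_nat i = W" "i < j"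
      using that by (auto simp: i_def)
    then have "ms j i > 0" "ms j i * (1 + (1/2) ^ j) \<le> norm (defect W (p + Ds j))"
      using stage_Ds[of j] W unfolding stage_def by auto
    moreover have "ms j i \<le> ms j i * (1 + (1/2) ^ j)"
      using \<open>ms j i > 0\<close> by simp
    ultimately show ?thesis
      using ms_eventually_const[OF that] unfolding M_def by linarith
  qed
  have "fps_coeffs_tendsto sequentially (\<lambda>j. p + Ds j) (p + limit)"
    unfolding fps_coeffs_tendsto_def by (auto intro!: tendsto_intros Ds_nth_tendsto_limit)
  then have "fps_coeffs_tendsto sequentially (\<lambda>j. word_eval W f (conj_by (p + Ds j) g))
      (word_eval W f (conj_by (p + limit) g))"
    using limit_nth_1 g_nth_1 by (rule fps_coeffs_tendsto_word_eval_conj_by)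
  then have "(\<lambda>j. norm (defect W (p + Ds j))) \<longlonglongrightarrow> norm (defect W (p + limit))"
    unfolding defect_def fps_coeffs_tendsto_def by (intro tendsto_intros) blast
  then have "M \<le> norm (defect W (p + limit))"
    by (rule LIMSEQ_le_const) (use margin in blast)
  with margin[of "Suc i"] have "defect W (p + limit) \<noteq> 0"
    by auto
  then show ?thesis
    unfolding defect_def by auto
qed

end

lemma (in free_perturbation) exists_free_perturbation:
  "\<exists>D. D $ 0 = 0 \<and> (p + D) $ 1 \<noteq> 0 \<and> summable (\<lambda>k. norm (D $ k) * R ^ k) \<and>
     (\<Sum>k. norm (D $ k) * R ^ k) \<le> \<delta> \<and> generate_free f (conj_by (p + D) g)"
proof -
  have "\<exists>s. \<forall>j. stage j (fst (s j)) (snd (s j)) \<and>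
      (\<forall>K. weighted_sum R K (fst (s (Suc j)) - fst (s j)) \<le> budget * (1/2) ^ Suc j) \<and>
      (\<forall>i<j. snd (s (Suc j)) i = snd (s j) i)"
  proof (rule dependent_nat_choice)
    show "\<exists>s. stage 0 (fst s) (snd s)"
      using stage_0 by auto
    show "\<exists>s'. stage (Suc j) (fst s') (snd s') \<and>
        (\<forall>K. weighted_sum R K (fst s' - fst s) \<le> budget * (1/2) ^ Suc j) \<and>
        (\<forall>i<j. snd s' i = snd s i)" if "stage j (fst s) (snd s)" for s j
      using stage_Suc[OF that] by auto
  qed
  then obtain s where s: "\<And>j. stage j (fst (s j)) (snd (s j)) \<and>
      (\<forall>K. weighted_sum R K (fst (s (Suc j)) - fst (s j)) \<le> budget * (1/2) ^ Suc j) \<and>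
      (\<forall>i<j. snd (s (Suc j)) i = snd (s j) i)"
    by blast
  interpret free_perturbation_sequence f g p R \<delta> witness witness_index
      "\<lambda>j. fst (s j)" "\<lambda>j. snd (s j)"
    using s by unfold_locales auto
  show ?thesis
    using limit_nth_0 limit_nth_1 weighted_summable_limit word_eval_limit_ne
    unfolding generate_free_def nontrivial_word_def by blast
qed

section \<open>Weighted neighbourhoods in the analytic topology\<close>

lemma fps_conv_radius_ge_if_weighted_summable:
  fixes D :: "complex fps"
  assumes "summable (\<lambda>k. norm (D $ k) * R ^ k)" "R \<ge> 0"
  shows "ereal R \<le> fps_conv_radius D"
proof -
  have "summable (\<lambda>k. D $ k * complex_of_real R ^ k)"
    by (rule summable_norm_cancel) (use assms in \<open>simp add: norm_mult norm_power\<close>)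
  from conv_radius_geI[OF this] show ?thesis
    using assms(2) by (simp add: fps_conv_radius_def)
qed

lemma add_mem_Diff0:
  assumes "p \<in> Diff0" "D $ 0 = 0" "(p + D) $ 1 \<noteq> 0"
    and "summable (\<lambda>k. norm (D $ k) * R ^ k)" "R > 0"
  shows "p + D \<in> Diff0"
proof -
  have "0 < min (fps_conv_radius p) (fps_conv_radius D)"
    using assms fps_conv_radius_ge_if_weighted_summable[OF assms(4)] unfolding Diff0_def
    by (auto intro: order.strict_trans2[of 0 "ereal R"])
  also have "\<dots> \<le> fps_conv_radius (p + D)"
    by (rule fps_conv_radius_add)
  finally show ?thesis
    using assms unfolding Diff0_def by simp
qed

lemma weighted_summable_mono:
  fixes D :: "complex fps"
  assumes "summable (\<lambda>k. norm (D $ k) * R ^ k)" "0 \<le> r" "r \<le> R"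
  shows "summable (\<lambda>k. norm (D $ k) * r ^ k)"
    and "(\<Sum>k. norm (D $ k) * r ^ k) \<le> (\<Sum>k. norm (D $ k) * R ^ k)"
proof -
  have le: "norm (D $ k) * r ^ k \<le> norm (D $ k) * R ^ k" for k
    using assms by (intro mult_left_mono power_mono) auto
  show summable: "summable (\<lambda>k. norm (D $ k) * r ^ k)"
    by (rule summable_comparison_test'[OF assms(1)]) (use le assms(2) in auto)
  show "(\<Sum>k. norm (D $ k) * r ^ k) \<le> (\<Sum>k. norm (D $ k) * R ^ k)"
    by (rule suminf_le[OF le summable assms(1)])
qed

lemma norm_eval_fps_le_weighted_sum:
  fixes D :: "complex fps"
  assumes "summable (\<lambda>k. norm (D $ k) * r ^ k)" "norm z < r"
  shows "norm (eval_fps D z) \<le> (\<Sum>k. norm (D $ k) * r ^ k)"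
proof -
  have le: "norm (D $ k * z ^ k) \<le> norm (D $ k) * r ^ k" for k
    using assms by (auto simp: norm_mult norm_power intro!: mult_left_mono power_mono)
  have summable: "summable (\<lambda>k. norm (D $ k * z ^ k))"
    by (rule summable_comparison_test'[OF assms(1)]) (use le in auto)
  have "norm (eval_fps D z) \<le> (\<Sum>k. norm (D $ k * z ^ k))"
    unfolding eval_fps_def by (rule summable_norm[OF summable])
  also have "\<dots> \<le> (\<Sum>k. norm (D $ k) * r ^ k)"
    by (rule suminf_le[OF le summable assms(1)])
  finally show ?thesis .
qed

lemma extends_to_unique:
  assumes "extends_to r F \<phi>" "extends_to r F \<phi>'" "z \<in> ball 0 r"
  shows "\<phi> z = \<phi>' z"
proof -
  have "\<forall>\<^sub>F z in nhds 0. \<phi> z = \<phi>' z"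
    using assms(1,2) unfolding extends_to_def by (auto elim: eventually_elim2)
  then obtain U where U: "open U" "0 \<in> U" "\<And>z. z \<in> U \<Longrightarrow> \<phi> z = \<phi>' z"
    unfolding eventually_nhds by blast
  have "norm z < r"
    using assms(3) by simp
  then have "r > 0"
    using norm_ge_zero[of z] by linarith
  show ?thesis
  proof (rule analytic_continuation_open[of "U \<inter> ball 0 r" "ball 0 r" \<phi> \<phi>' z])
    show "U \<inter> ball 0 r \<noteq> {}"
      using U \<open>r > 0\<close> by auto
  qed (use U assms in \<open>auto simp: extends_to_def\<close>)
qed

lemma anorm_eq_SUP:
  assumes "extends_to r F \<phi>"
  shows "anorm r F = (SUP z\<in>ball 0 r. ereal (norm (\<phi> z)))"
proof -
  have "extends_to r F (SOME \<phi>. extends_to r F \<phi>)"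
    using assms by (rule someI[of "extends_to r F"])
  then have "(SOME \<phi>. extends_to r F \<phi>) z = \<phi> z" if "z \<in> ball 0 r" for z
    using assms that by (rule extends_to_unique)
  then show ?thesis
    using assms unfolding anorm_def by (auto intro!: SUP_cong)
qed

lemma extends_to_add_eval_fps:
  assumes "extends_to r A \<psi>" "ereal r \<le> fps_conv_radius D" "r > 0"
  shows "extends_to r (A + D) (\<lambda>z. \<psi> z + eval_fps D z)"
  unfolding extends_to_def
proof (intro conjI)
  have "fps_conv_radius A > 0"
    using assms(1) unfolding extends_to_def by blast
  then show "fps_conv_radius (A + D) > 0"
    using fps_conv_radius_add[of A D] assms(2,3)
    by (metis ereal_less(2) min_less_iff_conj order_less_le_trans)
  have "eval_fps D holomorphic_on ball 0 r"
  proof (rule holomorphic_on_eval_fps, rule subsetI)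
    fix z :: complex assume "z \<in> ball 0 r"
    then have "ereal (norm z) < ereal r"
      by simp
    then have "ereal (norm z) < fps_conv_radius D"
      using assms(2) by (rule order_less_le_trans)
    then show "z \<in> eball 0 (fps_conv_radius D)"
      by (simp add: dist_norm)
  qed
  then show "(\<lambda>z. \<psi> z + eval_fps D z) holomorphic_on ball 0 r"
    using assms(1) unfolding extends_to_def by (auto intro!: holomorphic_intros)
  have "\<forall>\<^sub>F z in nhds 0. z \<in> eball 0 (min (fps_conv_radius A) (ereal r))"
    using \<open>fps_conv_radius A > 0\<close> assms(3)
    by (intro eventually_nhds_in_open) (auto simp: zero_ereal_def)
  moreover have "\<forall>\<^sub>F z in nhds 0. \<psi> z = eval_fps A z"
    using assms(1) unfolding extends_to_def by blast
  ultimately show "\<forall>\<^sub>F z in nhds 0. \<psi> z + eval_fps D z = eval_fps (A + D) z"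
  proof eventually_elim
    case (elim z)
    then have "ereal (norm z) < ereal r"
      by (simp add: dist_norm)
    then have "ereal (norm z) < fps_conv_radius D"
      using assms(2) by (rule order_less_le_trans)
    then show ?case
      using elim by (simp add: eval_fps_add dist_norm)
  qed
qed

lemma anorm_add_less:
  assumes "r > 0" "anorm r A < ereal \<epsilon>"
  shows "\<exists>\<eta>>0. \<forall>D. summable (\<lambda>k. norm (D $ k) * r ^ k) \<and> (\<Sum>k. norm (D $ k) * r ^ k) \<le> \<eta> \<longrightarrow>
           anorm r (A + D) < ereal \<epsilon>"
proof -
  obtain \<psi> where \<psi>: "extends_to r A \<psi>"
    using assms(2) unfolding anorm_def by (auto split: if_splits)
  define S where "S = (SUP z\<in>ball 0 r. ereal (norm (\<psi> z)))"
  have "S \<ge> 0"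
    unfolding S_def using assms(1) by (intro SUP_upper2[of 0]) auto
  moreover have "S < ereal \<epsilon>"
    using assms(2) anorm_eq_SUP[OF \<psi>] unfolding S_def by simp
  ultimately obtain s where s: "S = ereal s" "s < \<epsilon>"
    by (cases S) auto
  have \<psi>_le: "norm (\<psi> z) \<le> s" if "z \<in> ball 0 r" for z
    using SUP_upper[OF that, of "\<lambda>z. ereal (norm (\<psi> z))"] s(1) unfolding S_def by simp
  show ?thesis
  proof (intro exI[of _ "(\<epsilon> - s) / 2"] conjI allI impI)
    show "(\<epsilon> - s) / 2 > 0"
      using s(2) by simp
    fix D :: "complex fps"
    assume D: "summable (\<lambda>k. norm (D $ k) * r ^ k) \<and> (\<Sum>k. norm (D $ k) * r ^ k) \<le> (\<epsilon> - s) / 2"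
    have ext: "extends_to r (A + D) (\<lambda>z. \<psi> z + eval_fps D z)"
      using \<psi> fps_conv_radius_ge_if_weighted_summable[of D r] D assms(1)
      by (intro extends_to_add_eval_fps) auto
    have "anorm r (A + D) \<le> ereal (s + (\<epsilon> - s) / 2)"
      unfolding anorm_eq_SUP[OF ext]
    proof (rule SUP_least)
      fix z :: complex assume z: "z \<in> ball 0 r"
      have "norm (\<psi> z + eval_fps D z) \<le> norm (\<psi> z) + norm (eval_fps D z)"
        by (rule norm_triangle_ineq)
      also have "\<dots> \<le> s + (\<epsilon> - s) / 2"
      proof -
        have "norm (eval_fps D z) \<le> (\<Sum>k. norm (D $ k) * r ^ k)"
          using D z by (intro norm_eval_fps_le_weighted_sum) auto
        then show ?thesis
          using \<psi>_le[OF z] D by linarith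
      qed
      finally show "ereal (norm (\<psi> z + eval_fps D z)) \<le> ereal (s + (\<epsilon> - s) / 2)"
        by simp
    qed
    also have "\<dots> < ereal \<epsilon>"
      using s(2) by (simp add: field_simps)
    finally show "anorm r (A + D) < ereal \<epsilon>" .
  qed
qed

definition weighted_ball :: "real \<Rightarrow> real \<Rightarrow> complex fps \<Rightarrow> complex fps set" where
  "weighted_ball R \<delta> p =
     {p + D | D. summable (\<lambda>k. norm (D $ k) * R ^ k) \<and> (\<Sum>k. norm (D $ k) * R ^ k) \<le> \<delta>}"

lemma add_mem_weighted_ball_iff:
  "p + D \<in> weighted_ball R \<delta> p \<longleftrightarrow>
     summable (\<lambda>k. norm (D $ k) * R ^ k) \<and> (\<Sum>k. norm (D $ k) * R ^ k) \<le> \<delta>"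
  unfolding weighted_ball_def by auto

lemma weighted_ball_mono:
  assumes "0 \<le> r" "r \<le> R" "\<delta> \<le> \<eta>"
  shows "weighted_ball R \<delta> p \<subseteq> weighted_ball r \<eta> p"
  unfolding weighted_ball_def using weighted_summable_mono[OF _ assms(1,2)] assms(3)
  by (fastforce intro: order_trans)

definition contains_weighted_ball :: "complex fps set \<Rightarrow> complex fps \<Rightarrow> bool" where
  "contains_weighted_ball T p \<longleftrightarrow> (\<exists>R>0. \<exists>\<delta>>0. Diff0 \<inter> weighted_ball R \<delta> p \<subseteq> T)"

lemma contains_weighted_ball_Int:
  assumes "contains_weighted_ball T p" "contains_weighted_ball T' p"
  shows "contains_weighted_ball (T \<inter> T') p"
proof -
  obtain R \<delta> R' \<delta>' where R: "R > 0" "\<delta> > 0" "R' > 0" "\<delta>' > 0"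
    and "Diff0 \<inter> weighted_ball R \<delta> p \<subseteq> T" "Diff0 \<inter> weighted_ball R' \<delta>' p \<subseteq> T'"
    using assms unfolding contains_weighted_ball_def by blast
  moreover have "weighted_ball (max R R') (min \<delta> \<delta>') p \<subseteq> weighted_ball R \<delta> p"
    "weighted_ball (max R R') (min \<delta> \<delta>') p \<subseteq> weighted_ball R' \<delta>' p"
    using R by (intro weighted_ball_mono; simp)+
  ultimately show ?thesis
    unfolding contains_weighted_ball_def
    by (intro exI[of _ "max R R'"] exI[of _ "min \<delta> \<delta>'"] conjI) auto
qed

lemma openin_analytic_topology_contains_weighted_ball:
  assumes "openin analytic_topology T" "p \<in> T"
  shows "contains_weighted_ball T p"
proof -
  have "generate_topology_on
      {{g\<in>Diff0. anorm r (g - f) < ereal \<epsilon>} | f r \<epsilon>. f \<in> Diff0 \<and> r > 0 \<and> \<epsilon> > 0} T"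
    using assms(1) unfolding analytic_topology_def openin_topology_generated_by_iff .
  then show ?thesis
    using assms(2)
  proof (induction arbitrary: p rule: generate_topology_on.induct)
    case (Int T T')
    then show ?case by (simp add: contains_weighted_ball_Int)
  next
    case (UN K)
    then obtain T where "T \<in> K" "p \<in> T" "contains_weighted_ball T p" by blast
    then show ?case
      unfolding contains_weighted_ball_def by blast
  next
    case (Basis T)
    then obtain f r \<epsilon> where T: "T = {g\<in>Diff0. anorm r (g - f) < ereal \<epsilon>}" "r > 0"
      by blast
    then obtain \<eta> where "\<eta> > 0" "\<And>D. summable (\<lambda>k. norm (D $ k) * r ^ k) \<Longrightarrow>
        (\<Sum>k. norm (D $ k) * r ^ k) \<le> \<eta> \<Longrightarrow> anorm r (p - f + D) < ereal \<epsilon>"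
      using anorm_add_less[of r "p - f" \<epsilon>] Basis.prems by auto
    then have "Diff0 \<inter> weighted_ball r \<eta> p \<subseteq> T"
      unfolding T(1) weighted_ball_def by (auto simp: algebra_simps)
    then show ?case
      unfolding contains_weighted_ball_def using T(2) \<open>\<eta> > 0\<close> by blast
  qed simp
qed

lemma exists_generate_free_in_weighted_ball:
  assumes "g \<in> Diff0" "no_universal_relation f g" "p \<in> Diff0" "R > 0" "\<delta> > 0"
  shows "\<exists>h \<in> Diff0 \<inter> weighted_ball R \<delta> p. generate_free f (conj_by h g)"
proof -
  have "\<forall>W. \<exists>w. nontrivial_word W \<longrightarrow> fst w $ 0 = 0 \<and> fst w $ 1 \<noteq> 0 \<and>
      word_eval W f (conj_by (fst w) g) $ snd w \<noteq> fps_X $ snd w"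
    using exists_word_coeff_witness assms(1,2) unfolding Diff0_def by fastforce
  from choice[OF this] obtain w where w: "\<forall>W. nontrivial_word W \<longrightarrow>
      fst (w W) $ 0 = 0 \<and> fst (w W) $ 1 \<noteq> 0 \<and>
      word_eval W f (conj_by (fst (w W)) g) $ snd (w W) \<noteq> fps_X $ snd (w W)"
    by blast
  interpret free_perturbation f g p R \<delta> "\<lambda>W. fst (w W)" "\<lambda>W. snd (w W)"
    using assms w unfolding Diff0_def by unfold_locales auto
  obtain D where D: "D $ 0 = 0" "(p + D) $ 1 \<noteq> 0" "summable (\<lambda>k. norm (D $ k) * R ^ k)"
    "(\<Sum>k. norm (D $ k) * R ^ k) \<le> \<delta>" "generate_free f (conj_by (p + D) g)"
    using exists_free_perturbation by blast
  then have "p + D \<in> Diff0"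
    using add_mem_Diff0 assms(3,4) by blast
  then show ?thesis
    using D add_mem_weighted_ball_iff by blast
qed

theorem theorem2p6:
  fixes f g :: "complex fps"
  assumes "f \<in> Diff0" and "g \<in> Diff0"
    and "f \<noteq> fps_X" and "g \<noteq> fps_X"
    and "no_universal_relation f g"
  shows "\<exists>U. U \<subseteq> Diff0 \<and> analytic_topology closure_of U = topspace analytic_topology \<and>
           (\<forall>h\<in>U. generate_free f (conj_by h g))"
proof (intro exI[of _ "{h\<in>Diff0. generate_free f (conj_by h g)}"] conjI)
  show "analytic_topology closure_of {h\<in>Diff0. generate_free f (conj_by h g)} =
      topspace analytic_topology"
    unfolding dense_intersects_open
  proof (intro allI impI)
    fix T assume T: "openin analytic_topology T \<and> T \<noteq> {}"
    then obtain p where "p \<in> T" by blast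
    then have "p \<in> Diff0"
      using openin_subset[of analytic_topology T] T unfolding analytic_topology_def by auto
    obtain R \<delta> where "R > 0" "\<delta> > 0" "Diff0 \<inter> weighted_ball R \<delta> p \<subseteq> T"
      using openin_analytic_topology_contains_weighted_ball[OF _ \<open>p \<in> T\<close>] T
      unfolding contains_weighted_ball_def by blast
    then show "{h\<in>Diff0. generate_free f (conj_by h g)} \<inter> T \<noteq> {}"
      using exists_generate_free_in_weighted_ball[OF assms(2,5) \<open>p \<in> Diff0\<close>] by blast
  qed
qed auto

end
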